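(* Let $(\mathcal{M},\mathcal{L})$ be a regular symplectic pair with $\mathcal{M},\mathcal{L}\in\mathbb{C}^{2n\times2n}$ and $\mathrm{ind}_\infty(\mathcal{M},\mathcal{L})\le1$. Let $\hat n\le n$, $\ell=n-\hat n$, $U_0,U_\infty\in\mathbb{C}^{2n\times\ell}$, $U_1\in\mathbb{C}^{2n\times2\hat n}$, $\mathbf{U}=[U_1\,|\,U_0,U_\infty]$ and a symplectic $\widehat{\mathcal{S}}\in\mathbb{C}^{2\hat n\times2\hat n}$ satisfy $\mathbf{U}^H\mathcal{J}_n\mathbf{U}=\mathcal{J}_{\hat n}\oplus\mathcal{J}_\ell$, $\mathcal{M}U_0=0$, $\mathcal{L}U_\infty=0$, $\mathcal{M}U_1=\mathcal{L}U_1\widehat{\mathcal{S}}$, and let $\widehat{\mathcal{H}}$ be a Hamiltonian matrix with $e^{\widehat{\mathcal{H}}}=\widehat{\mathcal{S}}$. Define $$\mathcal{H}=\mathbf{U}(\widehat{\mathcal{H}}\oplus 0_{2\ell})(\mathcal{J}_{\hat n}\oplus\mathcal{J}_\ell)^H\mathbf{U}^H\mathcal{J}_n,$$ $$\Pi_0=\mathbf{U}(I_{2\hat n}\oplus I_\ell\oplus 0_\ell)(\mathcal{J}_{\hat n}\oplus\mathcal{J}_\ell)^H\mathbf{U}^H\mathcal{J}_n,\qquad \Pi_\infty=\mathbf{U}(I_{2\hat n}\oplus 0_\ell\oplus I_\ell)(\mathcal{J}_{\hat n}\oplus\mathcal{J}_\ell)^H\mathbf{U}^H\mathcal{J}_n.$$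 Then $\mathcal{M}\Pi_0=\mathcal{L}\Pi_\infty e^{\mathcal{H}}$.
   Context: $\mathcal{J}_m=\begin{bmatrix}0&I_m\\-I_m&0\end{bmatrix}$. A matrix $\mathcal{H}\in\mathbb{C}^{2m\times2m}$ is Hamiltonian if $\mathcal{H}\mathcal{J}_m=(\mathcal{H}\mathcal{J}_m)^H$; $\mathcal{S}$ is symplectic if $\mathcal{S}\mathcal{J}_m\mathcal{S}^H=\mathcal{J}_m$. A pair $(\mathcal{M},\mathcal{L})$ is symplectic if $\mathcal{M}\mathcal{J}_n\mathcal{M}^H=\mathcal{L}\mathcal{J}_n\mathcal{L}^H$, regular if $\det(\mathcal{M}-\lambda\mathcal{L})\ne0$ for some $\lambda$. $\mathrm{ind}_\infty(A,B)$ is the nilpotency index of the nilpotent block $N$ in the Kronecker canonical form $PAQ=\mathrm{diag}(J,I)$, $PBQ=\mathrm{diag}(I,N)$ of a regular pair, and is $0$ if $B$ is invertible. *)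

theory Defs
  imports "Jordan_Normal_Form.Matrix" "Jordan_Normal_Form.Determinant" Complex_Main
begin

definition ctrans :: "complex mat \<Rightarrow> complex mat" where
  "ctrans A = mat (dim_col A) (dim_row A) (\<lambda>(i,j). cnj (A $$ (j,i)))"

definition Jmat :: "nat \<Rightarrow> complex mat" where
  "Jmat m = four_block_mat (0\<^sub>m m m) (1\<^sub>m m) (- 1\<^sub>m m) (0\<^sub>m m m)"

definition dsum :: "complex mat \<Rightarrow> complex mat \<Rightarrow> complex mat" where
  "dsum A B = four_block_mat A (0\<^sub>m (dim_row A) (dim_col B)) (0\<^sub>m (dim_row B) (dim_col A)) B"

definition hcat :: "complex mat \<Rightarrow> complex mat \<Rightarrow> complex mat" where
  "hcat A B = mat (dim_row A) (dim_col A + dim_col B)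
     (\<lambda>(i,j). if j < dim_col A then A $$ (i,j) else B $$ (i, j - dim_col A))"

definition mexp :: "complex mat \<Rightarrow> complex mat" where
  "mexp A = mat (dim_row A) (dim_col A)
     (\<lambda>(i,j). \<Sum>k. (A ^\<^sub>m k) $$ (i,j) / of_nat (fact k))"

definition hamiltonian :: "nat \<Rightarrow> complex mat \<Rightarrow> bool" where
  "hamiltonian m H \<longleftrightarrow> H \<in> carrier_mat (2*m) (2*m) \<and>
     H * Jmat m = ctrans (H * Jmat m)"

definition symplectic :: "nat \<Rightarrow> complex mat \<Rightarrow> bool" where
  "symplectic m S \<longleftrightarrow> S \<in> carrier_mat (2*m) (2*m) \<and>
     S * Jmat m * ctrans S = Jmat m"

definition symplectic_pair :: "nat \<Rightarrow> complex mat \<Rightarrow> complex mat \<Rightarrow> bool" where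
  "symplectic_pair n M L \<longleftrightarrow> M \<in> carrier_mat (2*n) (2*n) \<and> L \<in> carrier_mat (2*n) (2*n) \<and>
     M * Jmat n * ctrans M = L * Jmat n * ctrans L"

definition regular_pair :: "complex mat \<Rightarrow> complex mat \<Rightarrow> bool" where
  "regular_pair A B \<longleftrightarrow> (\<exists>z::complex. det (A - z \<cdot>\<^sub>m B) \<noteq> 0)"

definition kcf :: "complex mat \<Rightarrow> complex mat \<Rightarrow> complex mat \<Rightarrow> complex mat
    \<Rightarrow> complex mat \<Rightarrow> complex mat \<Rightarrow> bool" where
  "kcf A B P Q Jb Nb \<longleftrightarrow>
     (let N = dim_row A; d = dim_row Nb in
      A \<in> carrier_mat N N \<and> B \<in> carrier_mat N N \<and>
      P \<in> carrier_mat N N \<and> Q \<in> carrier_mat N N \<and> invertible_mat P \<and> invertible_mat Q \<and>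
      d \<le> N \<and> Nb \<in> carrier_mat d d \<and> Jb \<in> carrier_mat (N - d) (N - d) \<and>
      (\<exists>k. Nb ^\<^sub>m k = 0\<^sub>m d d) \<and>
      P * A * Q = dsum Jb (1\<^sub>m d) \<and> P * B * Q = dsum (1\<^sub>m (N - d)) Nb)"

text \<open>Nilpotency index of the nilpotent block of the KCF (0 if B invertible).
  The index does not depend on the chosen KCF, since the nilpotent block is
  unique up to similarity.\<close>
definition ind_inf :: "complex mat \<Rightarrow> complex mat \<Rightarrow> nat" where
  "ind_inf A B = (if invertible_mat B then 0 else
     (LEAST k. \<exists>P Q Jb Nb. kcf A B P Q Jb Nb \<and> Nb ^\<^sub>m k = 0\<^sub>m (dim_row Nb) (dim_row Nb)))"

end

theory Submission
  imports Defs
begin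

text \<open>
  The relation \<open>U\<^sup>H J\<^sub>n U = J\<^sub>n\<^sub>h \<oplus> J\<^sub>l\<close> makes \<open>V = (J\<^sub>n\<^sub>h \<oplus> J\<^sub>l)\<^sup>H U\<^sup>H J\<^sub>n\<close> the inverse of \<open>U\<close>,
  so \<open>\<H>\<close>, \<open>\<Pi>\<^sub>0\<close> and \<open>\<Pi>\<^sub>\<infinity>\<close> are the block diagonal matrices \<open>\<H>\<^sub>h \<oplus> 0\<close>, \<open>I \<oplus> I \<oplus> 0\<close>,
  \<open>I \<oplus> 0 \<oplus> I\<close> written in the basis \<open>U\<close>, and \<open>e\<^sup>\<H> = U (S\<^sub>h \<oplus> I) V\<close>. The claim then
  reduces to the column-block identity
  \<open>M [U\<^sub>1 | U\<^sub>0 | 0] = L [U\<^sub>1 S\<^sub>h | 0 | U\<^sub>\<infinity>]\<close>, whose blocks vanish or agree by hypothesis.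
\<close>

lemma ctrans_dim [simp]: "dim_row (ctrans A) = dim_col A" "dim_col (ctrans A) = dim_row A"
  by (auto simp: ctrans_def)

lemma ctrans_carrier [simp]: "A \<in> carrier_mat r c \<Longrightarrow> ctrans A \<in> carrier_mat c r"
  by (auto simp: ctrans_def)

lemma ctrans_four_block_mat:
  assumes "A \<in> carrier_mat nr1 nc1" "B \<in> carrier_mat nr1 nc2"
    and "C \<in> carrier_mat nr2 nc1" "D \<in> carrier_mat nr2 nc2"
  shows "ctrans (four_block_mat A B C D) = four_block_mat (ctrans A) (ctrans C) (ctrans B) (ctrans D)"
proof -
  have "ctrans X = map_mat cnj (transpose_mat X)" for X
    by (rule eq_matI) (auto simp: ctrans_def)
  then show ?thesis
    using assms by (simp add: transpose_four_block_mat map_four_block_mat)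
qed

lemma ctrans_zero_mat [simp]: "ctrans (0\<^sub>m a b) = 0\<^sub>m b a"
  and ctrans_one_mat [simp]: "ctrans (1\<^sub>m a) = 1\<^sub>m a"
  and ctrans_uminus_one_mat [simp]: "ctrans (- 1\<^sub>m a) = - 1\<^sub>m a"
  by (auto intro!: eq_matI simp: ctrans_def)

lemma uminus_zero_mat [simp]: "- 0\<^sub>m a b = (0\<^sub>m a b :: 'a :: group_add mat)"
  by (rule eq_matI) auto

lemma Jmat_carrier [simp]: "Jmat m \<in> carrier_mat (2*m) (2*m)"
  unfolding Jmat_def mult_2 by auto

lemma ctrans_Jmat_mult_Jmat: "ctrans (Jmat m) * Jmat m = 1\<^sub>m (2*m)"
proof -
  have "ctrans (Jmat m) * Jmat m = four_block_mat (0\<^sub>m m m) (- 1\<^sub>m m) (1\<^sub>m m) (0\<^sub>m m m) *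
      four_block_mat (0\<^sub>m m m) (1\<^sub>m m) (- 1\<^sub>m m) (0\<^sub>m m m)"
    unfolding Jmat_def by (subst ctrans_four_block_mat) auto
  also have "\<dots> = four_block_mat (1\<^sub>m m) (0\<^sub>m m m) (0\<^sub>m m m) (1\<^sub>m m)"
    by (subst mult_four_block_mat[of _ m m _ m _ m _ _ m _ m]) auto
  finally show ?thesis by (simp add: mult_2)
qed

lemma dsum_carrier [simp]:
  "A \<in> carrier_mat a a' \<Longrightarrow> B \<in> carrier_mat b b' \<Longrightarrow> dsum A B \<in> carrier_mat (a+b) (a'+b')"
  unfolding dsum_def by auto

lemma dsum_dim [simp]:
  "dim_row (dsum A B) = dim_row A + dim_row B" "dim_col (dsum A B) = dim_col A + dim_col B"
  by (simp_all add: dsum_def)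

lemma dsum_index:
  "i < dim_row A + dim_row B \<Longrightarrow> j < dim_col A + dim_col B \<Longrightarrow>
   dsum A B $$ (i,j) = (if i < dim_row A then if j < dim_col A then A $$ (i,j) else 0
     else if j < dim_col A then 0 else B $$ (i - dim_row A, j - dim_col A))"
  unfolding dsum_def by simp

lemma dsum_one_mat: "dsum (1\<^sub>m a) (1\<^sub>m b) = 1\<^sub>m (a+b)"
  by (rule eq_matI) (auto simp: dsum_def)

lemma ctrans_dsum:
  "A \<in> carrier_mat a a' \<Longrightarrow> B \<in> carrier_mat b b' \<Longrightarrow> ctrans (dsum A B) = dsum (ctrans A) (ctrans B)"
  unfolding dsum_def by (subst ctrans_four_block_mat) auto

lemma dsum_mult_dsum:
  "A \<in> carrier_mat a a' \<Longrightarrow> B \<in> carrier_mat b b' \<Longrightarrow> C \<in> carrier_mat a' a'' \<Longrightarrow>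
   D \<in> carrier_mat b' b'' \<Longrightarrow> dsum A B * dsum C D = dsum (A * C) (B * D)"
  unfolding dsum_def by (subst mult_four_block_mat[of _ a a' _ b' _ b _ _ a'' _ b'']) auto

lemma ctrans_mult_self_dsum:
  assumes "A \<in> carrier_mat a a" "B \<in> carrier_mat b b"
    and "ctrans A * A = 1\<^sub>m a" "ctrans B * B = 1\<^sub>m b"
  shows "ctrans (dsum A B) * dsum A B = 1\<^sub>m (a+b)"
  using assms by (simp add: ctrans_dsum dsum_mult_dsum[of _ a a _ b b _ a _ b] dsum_one_mat)

lemma hcat_carrier [simp]:
  "A \<in> carrier_mat r a \<Longrightarrow> B \<in> carrier_mat r b \<Longrightarrow> hcat A B \<in> carrier_mat r (a+b)"
  unfolding hcat_def by auto

lemma hcat_dim [simp]: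
  "dim_row (hcat A B) = dim_row A" "dim_col (hcat A B) = dim_col A + dim_col B"
  by (simp_all add: hcat_def)

lemma hcat_index:
  "i < dim_row A \<Longrightarrow> j < dim_col A + dim_col B \<Longrightarrow>
   hcat A B $$ (i,j) = (if j < dim_col A then A $$ (i,j) else B $$ (i, j - dim_col A))"
  by (simp add: hcat_def)

lemma mult_hcat:
  assumes "M \<in> carrier_mat q r" "A \<in> carrier_mat r a" "B \<in> carrier_mat r b"
  shows "M * hcat A B = hcat (M * A) (M * B)"
proof (rule eq_matI)
  fix i j assume "i < dim_row (hcat (M * A) (M * B))" "j < dim_col (hcat (M * A) (M * B))"
  then have i: "i < q" and j: "j < a + b" using assms by (auto simp: hcat_def)
  have "col (hcat A B) j = (if j < a then col A j else col B (j - a))"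
    using assms j by (intro eq_vecI) (auto simp: hcat_index)
  then show "(M * hcat A B) $$ (i,j) = hcat (M * A) (M * B) $$ (i, j)"
    using assms i j by (simp add: hcat_index)
qed (use assms in \<open>auto simp: hcat_def\<close>)

lemma hcat_mult_dsum:
  assumes "A \<in> carrier_mat r a" "B \<in> carrier_mat r b" "C \<in> carrier_mat a c" "D \<in> carrier_mat b d"
  shows "hcat A B * dsum C D = hcat (A * C) (B * D)"
proof (rule eq_matI)
  fix i j assume "i < dim_row (hcat (A * C) (B * D))" "j < dim_col (hcat (A * C) (B * D))"
  then have i: "i < r" and j: "j < c + d" using assms by (auto simp: hcat_def)
  have row: "row (hcat A B) i = row A i @\<^sub>v row B i"
    using assms i by (intro eq_vecI) (auto simp: hcat_index)
  have entry: "(hcat A B * dsum C D) $$ (i, j) = row (hcat A B) i \<bullet> col (dsum C D) j"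
    using assms i j by simp
  show "(hcat A B * dsum C D) $$ (i, j) = hcat (A * C) (B * D) $$ (i, j)"
  proof (cases "j < c")
    case True
    then have "col (dsum C D) j = col C j @\<^sub>v col (0\<^sub>m b c) j"
      unfolding dsum_def using assms by (subst col_four_block_mat) auto
    then show ?thesis using assms i j True unfolding entry
      by (simp add: row hcat_index, subst scalar_prod_append[of _ a _ b]) auto
  next
    case False
    then have "col (dsum C D) j = col (0\<^sub>m a d) (j - c) @\<^sub>v col D (j - c)"
      unfolding dsum_def using assms j by (subst col_four_block_mat(2)) auto
    then show ?thesis using assms i j False unfolding entry
      by (simp add: row hcat_index, subst scalar_prod_append[of _ a _ b]) auto
  qed
qed (use assms in \<open>auto simp: hcat_def dsum_def\<close>)

lemma hcat3_mult_dsum3: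
  assumes "A \<in> carrier_mat r a" "B \<in> carrier_mat r b" "C \<in> carrier_mat r c"
    and "X \<in> carrier_mat a a'" "Y \<in> carrier_mat b b'" "Z \<in> carrier_mat c c'"
  shows "hcat A (hcat B C) * dsum X (dsum Y Z) = hcat (A * X) (hcat (B * Y) (C * Z))"
  using assms by (simp add: hcat_mult_dsum[of _ r a _ "b+c" _ a' _ "b'+c'"] hcat_mult_dsum)

subsection \<open>The matrix exponential\<close>

lemma norm_power_mat_entry_le:
  fixes A :: "complex mat"
  assumes A: "A \<in> carrier_mat N N" and "i < N" "j < N"
  shows "norm ((A ^\<^sub>m k) $$ (i,j)) \<le> (\<Sum>a<N. \<Sum>b<N. norm (A $$ (a,b))) ^ k"
  using assms(2,3)
proof (induction k arbitrary: j)
  case 0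
  then show ?case using A by auto
next
  case (Suc k)
  define c where "c = (\<Sum>a<N. \<Sum>b<N. norm (A $$ (a,b)))"
  have "(A ^\<^sub>m Suc k) $$ (i,j) = (\<Sum>m<N. (A ^\<^sub>m k) $$ (i,m) * A $$ (m,j))"
    using A Suc.prems by (simp add: scalar_prod_def lessThan_atLeast0)
  then have "norm ((A ^\<^sub>m Suc k) $$ (i,j)) \<le> (\<Sum>m<N. norm ((A ^\<^sub>m k) $$ (i,m)) * norm (A $$ (m,j)))"
    by (simp add: norm_sum norm_mult order.trans[OF norm_sum])
  also have "\<dots> \<le> (\<Sum>m<N. c ^ k * norm (A $$ (m,j)))"
    using Suc unfolding c_def by (intro sum_mono mult_right_mono) auto
  also have "\<dots> \<le> c ^ k * c"
    unfolding sum_distrib_left[symmetric] c_def using Suc.prems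
    by (intro mult_left_mono sum_mono member_le_sum) (auto intro!: sum_nonneg zero_le_power)
  finally show ?case unfolding c_def by (simp add: mult.commute)
qed

lemma summable_mexp_series:
  fixes A :: "complex mat"
  assumes "A \<in> carrier_mat N N" "i < N" "j < N"
  shows "summable (\<lambda>k. (A ^\<^sub>m k) $$ (i,j) / of_nat (fact k))"
proof (rule summable_comparison_test)
  define c where "c = (\<Sum>a<N. \<Sum>b<N. norm (A $$ (a,b)))"
  show "\<exists>N0. \<forall>k\<ge>N0. norm ((A ^\<^sub>m k) $$ (i,j) / of_nat (fact k)) \<le> c ^ k / fact k"
  proof (intro exI allI impI)
    fix k :: nat
    have "norm ((A ^\<^sub>m k) $$ (i,j)) \<le> c ^ k"
      using norm_power_mat_entry_le[OF assms] unfolding c_def .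
    moreover have "norm ((A ^\<^sub>m k) $$ (i,j) / of_nat (fact k)) = norm ((A ^\<^sub>m k) $$ (i,j)) / fact k"
      by (simp add: norm_divide)
    ultimately show "norm ((A ^\<^sub>m k) $$ (i,j) / of_nat (fact k)) \<le> c ^ k / fact k"
      by (simp add: divide_right_mono del: of_nat_fact)
  qed
  show "summable (\<lambda>k. c ^ k / fact k)"
    using summable_exp[of c] by (simp add: field_simps)
qed

lemma mexp_dim [simp]: "dim_row (mexp A) = dim_row A" "dim_col (mexp A) = dim_col A"
  by (simp_all add: mexp_def)

lemma mexp_index:
  "i < dim_row A \<Longrightarrow> j < dim_col A \<Longrightarrow> mexp A $$ (i,j) = (\<Sum>k. (A ^\<^sub>m k) $$ (i,j) / of_nat (fact k))"
  by (simp add: mexp_def)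

lemma mult3_mat_index:
  fixes P :: "'a :: comm_semiring_0 mat"
  assumes "P \<in> carrier_mat N N" "B \<in> carrier_mat N N" "Q \<in> carrier_mat N N" "i < N" "j < N"
  shows "(P * B * Q) $$ (i,j) = (\<Sum>b<N. \<Sum>a<N. P $$ (i,a) * B $$ (a,b) * Q $$ (b,j))"
proof -
  have "(P * B * Q) $$ (i,j) = (\<Sum>b<N. (P * B) $$ (i,b) * Q $$ (b,j))"
    using assms by (subst index_mult_mat) (auto simp: scalar_prod_def lessThan_atLeast0 intro!: sum.cong)
  also have "\<dots> = (\<Sum>b<N. (\<Sum>a<N. P $$ (i,a) * B $$ (a,b)) * Q $$ (b,j))"
    using assms by (intro sum.cong refl, subst index_mult_mat)
      (auto simp: scalar_prod_def lessThan_atLeast0 intro!: sum.cong)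
  finally show ?thesis by (simp add: sum_distrib_right)
qed

lemma mexp_similar:
  assumes sim: "similar_mat_wit A B P (Q :: complex mat)"
  shows "mexp A = P * mexp B * Q"
proof -
  define N where "N = dim_row A"
  note carr = similar_mat_witD[OF N_def sim]
  show ?thesis
  proof (rule eq_matI)
    fix i j assume "i < dim_row (P * mexp B * Q)" "j < dim_col (P * mexp B * Q)"
    then have i: "i < N" and j: "j < N" using carr by auto
    have "(\<lambda>k. P $$ (i,a) * ((B ^\<^sub>m k) $$ (a,b) / of_nat (fact k)) * Q $$ (b,j))
        sums (P $$ (i,a) * mexp B $$ (a,b) * Q $$ (b,j))" if "a < N" "b < N" for a b
      using summable_sums[OF summable_mexp_series[OF carr(5) that]] carr that
      by (intro sums_mult2 sums_mult) (simp add: mexp_index)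
    then have "(\<lambda>k. \<Sum>b<N. \<Sum>a<N. P $$ (i,a) * ((B ^\<^sub>m k) $$ (a,b) / of_nat (fact k)) * Q $$ (b,j))
        sums (\<Sum>b<N. \<Sum>a<N. P $$ (i,a) * mexp B $$ (a,b) * Q $$ (b,j))"
      by (intro sums_sum) auto
    moreover have "(A ^\<^sub>m k) $$ (i,j) / of_nat (fact k) =
        (\<Sum>b<N. \<Sum>a<N. P $$ (i,a) * ((B ^\<^sub>m k) $$ (a,b) / of_nat (fact k)) * Q $$ (b,j))" for k
      unfolding similar_mat_wit_pow_id[OF sim]
      by (subst mult3_mat_index[of _ N]) (use carr(5-7) i j in \<open>auto simp: sum_divide_distrib\<close>)
    moreover have "(P * mexp B * Q) $$ (i,j) = (\<Sum>b<N. \<Sum>a<N. P $$ (i,a) * mexp B $$ (a,b) * Q $$ (b,j))"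
      by (rule mult3_mat_index) (use carr i j in auto)
    ultimately show "mexp A $$ (i,j) = (P * mexp B * Q) $$ (i,j)"
      using carr(4) i j by (simp only: mexp_index sums_iff carrier_matD)
  qed (use carr in auto)
qed

lemma mexp_dsum:
  fixes A :: "complex mat"
  assumes A: "A \<in> carrier_mat a a" and B: "B \<in> carrier_mat b b"
  shows "mexp (dsum A B) = dsum (mexp A) (mexp B)"
proof (rule eq_matI)
  fix i j assume "i < dim_row (dsum (mexp A) (mexp B))" "j < dim_col (dsum (mexp A) (mexp B))"
  then have ij: "i < a + b" "j < a + b" using A B by (auto simp: dsum_def)
  have [simp]: "dim_row A = a" "dim_col A = a" "dim_row B = b" "dim_col B = b"
    using A B by auto
  have "dsum A B ^\<^sub>m k = dsum (A ^\<^sub>m k) (B ^\<^sub>m k)" for k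
    unfolding dsum_def using A B by (simp add: pow_four_block_mat)
  then have "mexp (dsum A B) $$ (i,j) = (\<Sum>k. dsum (A ^\<^sub>m k) (B ^\<^sub>m k) $$ (i,j) / of_nat (fact k))"
    using ij by (subst mexp_index) auto
  moreover have "dsum (A ^\<^sub>m k) (B ^\<^sub>m k) $$ (i,j) = (if i < a then if j < a then (A ^\<^sub>m k) $$ (i,j) else 0
      else if j < a then 0 else (B ^\<^sub>m k) $$ (i - a, j - a))" for k
    using A B ij by (subst dsum_index) auto
  moreover have "dsum (mexp A) (mexp B) $$ (i,j) = (if i < a then if j < a then mexp A $$ (i,j) else 0
      else if j < a then 0 else mexp B $$ (i - a, j - a))"
    using ij by (subst dsum_index) auto
  ultimately show "mexp (dsum A B) $$ (i,j) = dsum (mexp A) (mexp B) $$ (i,j)"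
    using ij by (auto simp: mexp_index)
qed (use A B in \<open>auto simp: dsum_def\<close>)

lemma mexp_zero_mat: "mexp (0\<^sub>m m m) = 1\<^sub>m m"
proof (rule eq_matI)
  fix i j assume "i < dim_row (1\<^sub>m m)" "j < dim_col (1\<^sub>m m)"
  then have ij: "i < m" "j < m" by auto
  have pow: "(0\<^sub>m m m) ^\<^sub>m k = (if k = 0 then 1\<^sub>m m else (0\<^sub>m m m :: complex mat))" for k
    by (induction k) auto
  have "(\<lambda>k. ((0\<^sub>m m m) ^\<^sub>m k) $$ (i,j) / of_nat (fact k)) =
      (\<lambda>k. if k = 0 then (1\<^sub>m m :: complex mat) $$ (i,j) else 0)"
    using ij by (auto simp: pow)
  moreover have "(\<lambda>k. if k = 0 then (1\<^sub>m m :: complex mat) $$ (i,j) else 0) sums 1\<^sub>m m $$ (i,j)"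
    using sums_single[of 0 "\<lambda>_. (1\<^sub>m m :: complex mat) $$ (i,j)"] by simp
  ultimately show "mexp (0\<^sub>m m m) $$ (i,j) = 1\<^sub>m m $$ (i,j)"
    using ij by (simp add: mexp_index sums_iff)
qed (auto simp: mexp_def)

subsection \<open>Change of basis by a \<open>J\<close>-orthogonal matrix\<close>

lemma left_inverse_of_ctrans_congruent:
  fixes U :: "complex mat"
  assumes "U \<in> carrier_mat N N" "J \<in> carrier_mat N N" "W \<in> carrier_mat N N"
    and "ctrans U * J * U = W" "ctrans W * W = 1\<^sub>m N"
  shows "ctrans W * ctrans U * J * U = 1\<^sub>m N"
proof -
  have "ctrans W * ctrans U * J * U = ctrans W * (ctrans U * J) * U"
    using assms(1-3) by (simp add: assoc_mult_mat[of _ N N _ N _ N])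
  also have "\<dots> = ctrans W * (ctrans U * J * U)"
    using assms(1-3) by (subst assoc_mult_mat[of _ N N _ N _ N]) auto
  finally show ?thesis using assms(4,5) by simp
qed

lemma left_inverse_of_symplectic_basis:
  assumes "U \<in> carrier_mat (2*n) (2*n)" "n = a + b"
    and "ctrans U * Jmat n * U = dsum (Jmat a) (Jmat b)"
  shows "ctrans (dsum (Jmat a) (Jmat b)) * ctrans U * Jmat n * U = 1\<^sub>m (2*n)"
proof (rule left_inverse_of_ctrans_congruent[OF assms(1) Jmat_carrier _ assms(3)])
  show "dsum (Jmat a) (Jmat b) \<in> carrier_mat (2*n) (2*n)"
    using assms(2) dsum_carrier[OF Jmat_carrier Jmat_carrier, of a b] by simp
  show "ctrans (dsum (Jmat a) (Jmat b)) * dsum (Jmat a) (Jmat b) = 1\<^sub>m (2*n)"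
    using assms(2) ctrans_mult_self_dsum[OF Jmat_carrier Jmat_carrier ctrans_Jmat_mult_Jmat ctrans_Jmat_mult_Jmat]
    by simp
qed

lemma similar_mat_wit_change_of_basis:
  fixes U :: "'a :: field mat"
  assumes "U \<in> carrier_mat N N" "V \<in> carrier_mat N N" "V * U = 1\<^sub>m N" "X \<in> carrier_mat N N"
  shows "similar_mat_wit (U * X * V) X U V"
  using assms mat_mult_left_right_inverse[of V N U] by (intro similar_mat_witI) auto

lemma change_of_basis_mult:
  fixes U :: "'a :: semiring_1 mat"
  assumes U: "U \<in> carrier_mat N N" and V: "V \<in> carrier_mat N N" and VU: "V * U = 1\<^sub>m N"
    and X: "X \<in> carrier_mat N N" and Y: "Y \<in> carrier_mat N N"
  shows "(U * X * V) * (U * Y * V) = U * (X * Y) * V"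
proof -
  have "V * (U * (Y * V)) = Y * V"
    using U V Y by (simp add: assoc_mult_mat[symmetric, of V N N U N "Y * V" N] VU)
  then show ?thesis
    using U V X Y by (simp add: assoc_mult_mat[of _ N N _ N _ N])
qed

lemma intertwining_in_basis:
  fixes U :: "'a :: semiring_1 mat"
  assumes U: "U \<in> carrier_mat N N" and V: "V \<in> carrier_mat N N" and VU: "V * U = 1\<^sub>m N"
    and M: "M \<in> carrier_mat N N" and L: "L \<in> carrier_mat N N"
    and X: "X \<in> carrier_mat N N" and Y: "Y \<in> carrier_mat N N" and E: "E \<in> carrier_mat N N"
    and blocks: "M * U * X = L * U * (Y * E)"
  shows "M * (U * X * V) = L * (U * Y * V) * (U * E * V)"
proof -
  note assoc = assoc_mult_mat[of _ N N _ N _ N] mult_carrier_mat[of _ N N _ N]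
  have "M * (U * X * V) = M * U * X * V"
    using M U X V by (simp add: assoc)
  also have "\<dots> = L * (U * (Y * E) * V)"
    using L U Y E V by (simp add: blocks assoc)
  also have "\<dots> = L * (U * Y * V) * (U * E * V)"
    using L U Y E V by (simp add: assoc change_of_basis_mult[OF U V VU Y E, symmetric])
  finally show ?thesis .
qed

subsection \<open>Deflating blocks of the pencil\<close>

lemma pencil_blocks_in_basis:
  assumes M: "M \<in> carrier_mat N N" and L: "L \<in> carrier_mat N N"
    and U1: "U1 \<in> carrier_mat N k" and U0: "U0 \<in> carrier_mat N l" and Uinf: "Uinf \<in> carrier_mat N l"
    and S: "S \<in> carrier_mat k k"
    and "M * U0 = 0\<^sub>m N l" "L * Uinf = 0\<^sub>m N l" "M * U1 = L * U1 * S"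
  shows "M * hcat U1 (hcat U0 Uinf) * dsum (1\<^sub>m k) (dsum (1\<^sub>m l) (0\<^sub>m l l)) =
         L * hcat U1 (hcat U0 Uinf) * dsum S (dsum (0\<^sub>m l l) (1\<^sub>m l))"
proof -
  have LU1S: "L * U1 * S \<in> carrier_mat N k"
    using L U1 S by (metis mult_carrier_mat)
  have "M * hcat U1 (hcat U0 Uinf) * dsum (1\<^sub>m k) (dsum (1\<^sub>m l) (0\<^sub>m l l)) =
      hcat (M * U1 * 1\<^sub>m k) (hcat (M * U0 * 1\<^sub>m l) (M * Uinf * 0\<^sub>m l l))"
    using mult_hcat[OF M U1 hcat_carrier[OF U0 Uinf]] mult_hcat[OF M U0 Uinf]
    by (auto intro!: hcat3_mult_dsum3 intro: mult_carrier_mat M U0 U1 Uinf)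
  also have "\<dots> = hcat (L * U1 * S) (hcat (0\<^sub>m N l) (0\<^sub>m N l))"
    using assms(7,9) M Uinf right_mult_one_mat[OF LU1S] by simp
  also have "\<dots> = hcat (L * U1 * S) (hcat (L * U0 * 0\<^sub>m l l) (L * Uinf * 1\<^sub>m l))"
    using assms(8) L U0 by simp
  also have "\<dots> = L * hcat U1 (hcat U0 Uinf) * dsum S (dsum (0\<^sub>m l l) (1\<^sub>m l))"
    using mult_hcat[OF L U1 hcat_carrier[OF U0 Uinf]] mult_hcat[OF L U0 Uinf]
    by (auto intro!: hcat3_mult_dsum3[symmetric] intro: mult_carrier_mat L U0 U1 Uinf S)
  finally show ?thesis .
qed

theorem lemma2p6:
  fixes n nh l :: nat and M L U0 Uinf U1 Sh Hh :: "complex mat"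
  assumes "symplectic_pair n M L" and "regular_pair M L" and "ind_inf M L \<le> 1"
    and "nh \<le> n" and "l = n - nh"
    and "U0 \<in> carrier_mat (2*n) l" and "Uinf \<in> carrier_mat (2*n) l"
    and "U1 \<in> carrier_mat (2*n) (2*nh)"
    and "symplectic nh Sh"
    and "ctrans (hcat U1 (hcat U0 Uinf)) * Jmat n * hcat U1 (hcat U0 Uinf) = dsum (Jmat nh) (Jmat l)"
    and "M * U0 = 0\<^sub>m (2*n) l" and "L * Uinf = 0\<^sub>m (2*n) l"
    and "M * U1 = L * U1 * Sh"
    and "hamiltonian nh Hh" and "mexp Hh = Sh"
  shows "let U = hcat U1 (hcat U0 Uinf);
             JJ = ctrans (dsum (Jmat nh) (Jmat l));
             H = U * dsum Hh (0\<^sub>m (2*l) (2*l)) * JJ * ctrans U * Jmat n;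
             Pi0 = U * dsum (1\<^sub>m (2*nh)) (dsum (1\<^sub>m l) (0\<^sub>m l l)) * JJ * ctrans U * Jmat n;
             Piinf = U * dsum (1\<^sub>m (2*nh)) (dsum (0\<^sub>m l l) (1\<^sub>m l)) * JJ * ctrans U * Jmat n
         in M * Pi0 = L * Piinf * mexp H"
proof -
  define N where "N = 2 * n"
  define U where "U = hcat U1 (hcat U0 Uinf)"
  define JJ where "JJ = ctrans (dsum (Jmat nh) (Jmat l))"
  define V where "V = JJ * ctrans U * Jmat n"
  define E where "E = dsum Sh (dsum (1\<^sub>m l) (1\<^sub>m l))"
  define Bh where "Bh = dsum Hh (0\<^sub>m (2*l) (2*l))"
  define D0 where "D0 = dsum (1\<^sub>m (2*nh)) (dsum (1\<^sub>m l) (0\<^sub>m l l))"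
  define Dinf where "Dinf = dsum (1\<^sub>m (2*nh)) (dsum (0\<^sub>m l l) (1\<^sub>m l))"
  have N: "2 * nh + (l + l) = N" "2 * nh + 2 * l = N" "2 * n = N" "n = nh + l"
    using assms(4,5) unfolding N_def by auto
  have M: "M \<in> carrier_mat N N" and L: "L \<in> carrier_mat N N"
    and Sh: "Sh \<in> carrier_mat (2*nh) (2*nh)" and Hh: "Hh \<in> carrier_mat (2*nh) (2*nh)"
    and U0: "U0 \<in> carrier_mat N l" and Uinf: "Uinf \<in> carrier_mat N l" and U1: "U1 \<in> carrier_mat N (2*nh)"
    using assms(1,6-9,14) N unfolding symplectic_pair_def symplectic_def hamiltonian_def by auto
  have U: "U \<in> carrier_mat N N"
    unfolding U_def using U0 U1 Uinf N by (metis hcat_carrier)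
  have JJ: "JJ \<in> carrier_mat N N" and J: "Jmat n \<in> carrier_mat N N"
    unfolding JJ_def using N by (metis Jmat_carrier ctrans_carrier dsum_carrier, metis Jmat_carrier)
  have V: "V \<in> carrier_mat N N"
    unfolding V_def using U JJ J by (metis ctrans_carrier mult_carrier_mat)
  have E: "E \<in> carrier_mat N N" and Bh: "Bh \<in> carrier_mat N N"
    and D0: "D0 \<in> carrier_mat N N" and Dinf: "Dinf \<in> carrier_mat N N"
    unfolding E_def Bh_def D0_def Dinf_def using Sh Hh N
    by (metis dsum_carrier one_carrier_mat zero_carrier_mat)+
  have VU: "V * U = 1\<^sub>m N"
    unfolding V_def JJ_def N(3)[symmetric] using U N(3,4) assms(10)[folded U_def]
    by (intro left_inverse_of_symplectic_basis) auto
  have in_basis: "U * X * JJ * ctrans U * Jmat n = U * X * V" if "X \<in> carrier_mat N N" for X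
    unfolding V_def using that U JJ J
    by (simp add: assoc_mult_mat[of _ N N _ N _ N] mult_carrier_mat[of _ N N _ N])
  have "mexp Bh = E"
    unfolding Bh_def E_def
    by (simp add: mexp_dsum[OF Hh zero_carrier_mat] assms(15) mexp_zero_mat dsum_one_mat mult_2)
  then have exp_H: "mexp (U * Bh * V) = U * E * V"
    using mexp_similar[OF similar_mat_wit_change_of_basis[OF U V VU Bh]] by simp
  have "Dinf * E = dsum Sh (dsum (0\<^sub>m l l) (1\<^sub>m l))"
    unfolding Dinf_def E_def using Sh
    by (simp add: dsum_mult_dsum[of _ "2*nh" "2*nh" _ "l+l" "l+l" _ "2*nh" _ "l+l"]
        dsum_mult_dsum[of _ l l _ l l _ l _ l])
  then have "M * U * D0 = L * U * (Dinf * E)"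
    unfolding U_def D0_def using pencil_blocks_in_basis[OF M L U1 U0 Uinf Sh] assms(11-13) N(3)
    by simp
  then have "M * (U * D0 * V) = L * (U * Dinf * V) * (U * E * V)"
    by (rule intertwining_in_basis[OF U V VU M L D0 Dinf E])
  then show ?thesis
    unfolding Let_def U_def[symmetric] JJ_def[symmetric] Bh_def[symmetric] D0_def[symmetric] Dinf_def[symmetric]
    by (simp add: in_basis D0 Dinf Bh exp_H)
qed

end
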